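(* Let $X$ be a non-negative random variable with absolutely continuous distribution function $F$, survival function $\bar F$, and mean residual life function $m_1(t)=E(X-t\mid X>t)$. Let $G$ be the proportional hazards model of $F$, i.e. $\bar G(x)=(\bar F(x))^\theta$ for some $\theta>0$, and let $\alpha,\beta>0$. Define $$R_{\alpha,\beta}(\bar F,t)=\int_t^\infty\left(\frac{\bar F(x)}{\bar F(t)}\right)^{\alpha+\beta\theta}dx .$$ Then the relationship $R_{\alpha,\beta}(\bar F,t)=k\,m_1(t)$ for all $t>0$, with $k$ a constant, holds if and only if $X$ has a generalized Pareto distribution, i.e. survival function $\bar F(x)=\left(1+\frac{b}{a}x\right)^{-\left(1+\frac1b\right)}$, $x>0$, $b>-1$, $a>0$.
   Context: $R_{\alpha,\beta}(\bar F,t)$ is the dynamic relative cumulative residual information measure $\int_t^\infty (\bar F(x)/\bar F(t))^\alpha(\bar G(x)/\bar G(t))^\beta dx$ under the proportional hazards model $\bar G=\bar F^\theta$.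
   Formalization: The exponent $\alpha+\beta\theta$ must differ from 1, $\bar F(x)^{\alpha+\beta\theta}$ is integrable over [0, infinity), and the generalized Pareto family includes b = 0 as exp(-x/a), with 1+(b/a)x replaced by max(0, 1+(b/a)x). The statement above fails without it. *)

theory Defs
  imports "HOL-Probability.Probability"
begin

definition survival :: "'a measure \<Rightarrow> ('a \<Rightarrow> real) \<Rightarrow> real \<Rightarrow> real" where
  "survival M X x = measure M {\<omega> \<in> space M. x < X \<omega>}"

definition mean_residual_life :: "'a measure \<Rightarrow> ('a \<Rightarrow> real) \<Rightarrow> real \<Rightarrow> real" where
  "mean_residual_life M X t =
     (LINT \<omega>:{\<omega> \<in> space M. t < X \<omega>}|M. X \<omega> - t) / survival M X t"

definition R_ph :: "real \<Rightarrow> real \<Rightarrow> real \<Rightarrow> (real \<Rightarrow> real) \<Rightarrow> real \<Rightarrow> real" where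
  "R_ph \<alpha> \<beta> \<theta> Fbar t = (LBINT x:{t..}. (Fbar x / Fbar t) powr (\<alpha> + \<beta> * \<theta>))"

text \<open>Survival function of the generalized Pareto distribution
  Fbar(x) = (1 + (b/a) x) powr (-(1 + 1/b)), truncated at 0 (bounded support when b < 0);
  the case b = 0 is the usual limiting member, the exponential law with mean a.\<close>
definition gen_pareto_surv :: "real \<Rightarrow> real \<Rightarrow> real \<Rightarrow> real" where
  "gen_pareto_surv a b x =
     (if b = 0 then exp (- x / a) else (max 0 (1 + (b / a) * x)) powr (- (1 + 1 / b)))"

end

theory Submission
  imports Defs
begin

(* Let T and S be the tail integrals of Fbar and of Fbar powr c, where c = alpha + beta * theta.
   By Fubini the mean residual life is m = T / Fbar, so the relation R = k m reads
   S = k T Fbar^(c - 1). As T' = -Fbar and S' = -Fbar^c, this identity makes Fbar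
   differentiable on its support with m' = (1 - c k) / (k (c - 1)); hence m(t) = a + b t with
   a = E X. Then T' = -T / (a + b t), an equation also solved by (a + b t) Gbar(t) for the
   generalized Pareto survival function Gbar, so Fbar = Gbar on the support. If Fbar vanishes,
   continuity at its first zero L forces a + b L <= 0 and -1 < b < 0. Conversely,
   (a + b t) Gbar(t)^e is an antiderivative of -((b + 1) e - b) Gbar^e, so R(t) and m(t) are
   both multiples of a + b t. *)

lemma tail_integral_eq_diff:
  fixes g :: "real \<Rightarrow> real"
  assumes [measurable]: "g \<in> borel_measurable borel"
    and int: "set_integrable lborel {a..} g" and "a \<le> t"
  shows "(LBINT x:{t..}. g x) = (LBINT x:{a..}. g x) - integral {a..t} g"
proof -
  have int_tail: "set_integrable lborel {t..} g" and int_Ico: "set_integrable lborel {a..<t} g"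
    and int_Icc: "set_integrable lborel {a..t} g"
    by (rule set_integrable_subset[OF int]; use assms in auto)+
  have "{a..} = {a..<t} \<union> {t..}" "{a..<t} \<inter> {t..} = {}" using \<open>a \<le> t\<close> by auto
  then have "(LBINT x:{a..}. g x) = (LBINT x:{a..<t}. g x) + (LBINT x:{t..}. g x)"
    using set_integral_Un[OF _ int_Ico int_tail] by simp
  moreover have "(LBINT x:{a..<t}. g x) = (LBINT x:{a..t}. g x)"
  proof -
    have "AE x in lborel. indicator {a..<t} x *\<^sub>R g x = indicator {a..t} x *\<^sub>R g x"
      using AE_lborel_singleton[of t] by eventually_elim (auto simp: indicator_def)
    then show ?thesis unfolding set_lebesgue_integral_def
      by (rule integral_cong_AE[rotated 2]) measurable
  qed
  ultimately show ?thesis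
    using set_borel_integral_eq_integral(2)[OF int_Icc] by simp
qed

lemma has_real_derivative_tail_integral:
  fixes g :: "real \<Rightarrow> real"
  assumes "g \<in> borel_measurable borel" "continuous_on {a..} g"
    and int: "set_integrable lborel {a..} g" and "a < t"
  shows "((\<lambda>s. LBINT x:{s..}. g x) has_real_derivative - g t) (at t)"
proof -
  have "((\<lambda>s. integral {a..s} g) has_real_derivative g t) (at t within {a..t+1})"
    by (rule integral_has_real_derivative) (use assms in \<open>auto intro: continuous_on_subset\<close>)
  moreover have "at t within {a..t+1} = at t"
    using \<open>a < t\<close> by (intro at_within_Icc_at) auto
  ultimately have "((\<lambda>s. (LBINT x:{a..}. g x) - integral {a..s} g) has_real_derivative - g t) (at t)"
    by (auto intro!: derivative_eq_intros)
  then show ?thesis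
  proof (rule has_field_derivative_transform_within_open[where S="{a<..}"])
    show "(LBINT x:{a..}. g x) - integral {a..s} g = (LBINT x:{s..}. g x)" if "s \<in> {a<..}" for s
      using tail_integral_eq_diff[OF assms(1) int, of s] that by simp
  qed (use assms in auto)
qed

lemma tendsto_tail_integral_at_top:
  fixes g :: "real \<Rightarrow> real"
  assumes "g \<in> borel_measurable borel" and int: "set_integrable lborel {a..} g"
  shows "((\<lambda>s. LBINT x:{s..}. g x) \<longlongrightarrow> 0) at_top"
proof -
  have "((\<lambda>s. LBINT x:{a..s}. g x) \<longlongrightarrow> (LBINT x:{a..}. g x)) at_top"
    by (rule tendsto_set_lebesgue_integral_at_top[OF _ int]) auto
  then have "((\<lambda>s. (LBINT x:{a..}. g x) - (LBINT x:{a..s}. g x)) \<longlongrightarrow> 0) at_top"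
    by (auto intro: tendsto_eq_intros)
  moreover have "\<forall>\<^sub>F s in at_top. (LBINT x:{a..}. g x) - (LBINT x:{a..s}. g x) = (LBINT x:{s..}. g x)"
    using eventually_ge_at_top[of a]
  proof eventually_elim
    case (elim s)
    have "set_integrable lborel {a..s} g"
      by (rule set_integrable_subset[OF int]) auto
    then show ?case
      using tail_integral_eq_diff[OF assms elim] set_borel_integral_eq_integral(2) by simp
  qed
  ultimately show ?thesis by (rule Lim_transform_eventually)
qed

lemma tail_integral_nonneg:
  fixes g :: "real \<Rightarrow> real"
  assumes "\<And>x. t \<le> x \<Longrightarrow> 0 \<le> g x"
  shows "0 \<le> (LBINT x:{t..}. g x)"
  unfolding set_lebesgue_integral_def
  by (intro integral_nonneg_AE) (use assms in \<open>auto simp: indicator_def\<close>)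

lemma linear_ode_solutions_proportional:
  fixes f g r :: "real \<Rightarrow> real"
  assumes "s \<le> t" and "continuous_on {s..t} f" "continuous_on {s..t} g"
    and g_nonzero: "\<And>x. x \<in> {s..t} \<Longrightarrow> g x \<noteq> 0"
    and "\<And>x. s < x \<Longrightarrow> x < t \<Longrightarrow> (f has_real_derivative r x * f x) (at x)"
    and "\<And>x. s < x \<Longrightarrow> x < t \<Longrightarrow> (g has_real_derivative r x * g x) (at x)"
  shows "f t * g s = f s * g t"
proof (cases "s = t")
  case False
  have "(\<lambda>x. f x / g x) t = (\<lambda>x. f x / g x) s"
  proof (rule DERIV_isconst_end[where f="\<lambda>x. f x / g x"])
    show "s < t" using False \<open>s \<le> t\<close> by simp
    show "continuous_on {s..t} (\<lambda>x. f x / g x)"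
      using assms by (intro continuous_intros) auto
    fix x assume x: "s < x" "x < t"
    have "((\<lambda>x. f x / g x) has_real_derivative
        (r x * f x * g x - f x * (r x * g x)) / (g x * g x)) (at x)"
      using x assms by (intro DERIV_divide) auto
    then show "((\<lambda>x. f x / g x) has_real_derivative 0) (at x)"
      by (simp add: algebra_simps)
  qed
  then show ?thesis
    using g_nonzero[of s] g_nonzero[of t] \<open>s \<le> t\<close> by (simp add: field_simps)
qed simp

lemma not_set_integrable_ge_inverse_linear:
  fixes g :: "real \<Rightarrow> real"
  assumes "g \<in> borel_measurable borel" "continuous_on {s..} g" "0 \<le> s" "0 < p" "0 < q" "0 < \<kappa>"
    and lower: "\<And>x. s \<le> x \<Longrightarrow> \<kappa> / (p + q * x) \<le> g x"
  shows "\<not> set_integrable lborel {s..} g"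
proof
  assume int: "set_integrable lborel {s..} g"
  define F where "F x = (LBINT y:{x..}. g y)" for x
  (* K is nonincreasing, yet it dominates the unbounded function \<kappa> / q * ln (p + q * x) *)
  define K where "K x = F x + \<kappa> / q * ln (p + q * x)" for x
  have F_nonneg: "0 \<le> F x" if "s \<le> x" for x
    unfolding F_def using that assms(3-6) lower
    by (intro tail_integral_nonneg order.trans[OF _ lower]) auto
  have K_deriv: "\<exists>D. (K has_real_derivative D) (at x) \<and> D \<le> 0" if "s < x" for x
  proof (intro exI conjI)
    have "(F has_real_derivative - g x) (at x)"
      unfolding F_def by (rule has_real_derivative_tail_integral[OF assms(1,2) int that])
    then show "(K has_real_derivative - g x + \<kappa> / q * (q / (p + q * x))) (at x)"
      unfolding K_def using that assms(3-5)
      by (auto intro!: derivative_eq_intros simp: add_pos_nonneg)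
    show "- g x + \<kappa> / q * (q / (p + q * x)) \<le> 0"
      using lower[of x] that assms(5) by simp
  qed
  have K_le: "K x \<le> K (s + 1)" if "s + 1 \<le> x" for x
  proof (rule DERIV_nonpos_imp_nonincreasing[OF that])
    show "\<exists>D. (K has_real_derivative D) (at y) \<and> D \<le> 0" if "s + 1 \<le> y" for y
      using K_deriv[of y] that by simp
  qed
  have "filterlim (\<lambda>x. p + q * x) at_top at_top"
    by (rule filterlim_tendsto_add_at_top[OF tendsto_const
          filterlim_tendsto_pos_mult_at_top[OF tendsto_const \<open>0 < q\<close> filterlim_ident]])
  then have "filterlim (\<lambda>x. \<kappa> / q * ln (p + q * x)) at_top at_top"
    using assms(5,6)
    by (intro filterlim_tendsto_pos_mult_at_top[OF tendsto_const _ filterlim_compose[OF ln_at_top]]) simp_all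
  then have "\<forall>\<^sub>F x in at_top. K (s + 1) < \<kappa> / q * ln (p + q * x)"
    unfolding filterlim_at_top_dense by blast
  then have "\<forall>\<^sub>F x in at_top. K (s + 1) < \<kappa> / q * ln (p + q * x) \<and> s + 1 \<le> x"
    by (rule eventually_conj) (rule eventually_ge_at_top)
  then obtain x where "K (s + 1) < \<kappa> / q * ln (p + q * x)" "s + 1 \<le> x"
    using eventually_happens'[OF trivial_limit_at_top_linorder] by blast
  with K_le[of x] F_nonneg[of x] show False by (simp add: K_def)
qed

lemma gen_pareto_surv_0 [simp]: "gen_pareto_surv a b 0 = 1"
  by (simp add: gen_pareto_surv_def)

lemma gen_pareto_surv_exponential: "gen_pareto_surv a 0 = (\<lambda>x. exp (- x / a))"
  by (simp add: gen_pareto_surv_def fun_eq_iff)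

lemma gen_pareto_surv_nonneg: "0 \<le> gen_pareto_surv a b x"
  by (simp add: gen_pareto_surv_def)

lemma gen_pareto_surv_eq_powr:
  assumes "0 < a" "b \<noteq> 0" "0 < a + b * x"
  shows "gen_pareto_surv a b x = (1 + b / a * x) powr - (1 + 1 / b)"
proof -
  have "0 < 1 + b / a * x" using assms by (simp add: field_simps)
  then show ?thesis using assms(2) by (simp add: gen_pareto_surv_def)
qed

lemma gen_pareto_surv_pos:
  assumes "0 < a" "0 < a + b * x"
  shows "0 < gen_pareto_surv a b x"
proof (cases "b = 0")
  case False
  have "1 + b / a * x \<noteq> 0" using assms by (simp add: field_simps)
  then show ?thesis using gen_pareto_surv_eq_powr[OF assms(1) False assms(2)] by simp
qed (simp add: gen_pareto_surv_def)

lemma gen_pareto_surv_eq_0: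
  assumes "0 < a" "a + b * x \<le> 0"
  shows "gen_pareto_surv a b x = 0"
proof -
  have "b \<noteq> 0" and "1 + b / a * x \<le> 0" using assms by (auto simp: field_simps)
  then show ?thesis by (simp add: gen_pareto_surv_def)
qed

lemma gen_pareto_surv_borel_measurable [measurable]:
  "gen_pareto_surv a b \<in> borel_measurable borel"
  unfolding gen_pareto_surv_def by measurable

lemma has_real_derivative_gen_pareto_surv:
  assumes "0 < a" "0 < a + b * x"
  shows "(gen_pareto_surv a b has_real_derivative - ((1 + b) / (a + b * x) * gen_pareto_surv a b x)) (at x)"
proof (cases "b = 0")
  case True
  have "((\<lambda>x. exp (- x / a)) has_real_derivative - (1 / a * exp (- x / a))) (at x)"
    using assms(1) by (auto intro!: derivative_eq_intros simp: field_simps)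
  then show ?thesis using True by (simp add: gen_pareto_surv_exponential)
next
  case False
  define y where "y = (\<lambda>x. 1 + b / a * x)"
  define p where "p = - (1 + 1 / b)"
  have y_pos: "0 < y x" using assms by (simp add: y_def field_simps)
  have "((\<lambda>x. y x powr p) has_real_derivative p * y x powr (p - 1) * (b / a)) (at x)"
    unfolding y_def using y_pos[unfolded y_def] assms(1) by (auto intro!: derivative_eq_intros)
  then have "(gen_pareto_surv a b has_real_derivative p * y x powr (p - 1) * (b / a)) (at x)"
  proof (rule has_field_derivative_transform_within_open[where S="{x. 0 < a + b * x}"])
    show "y z powr p = gen_pareto_surv a b z" if "z \<in> {x. 0 < a + b * x}" for z
      using gen_pareto_surv_eq_powr[OF assms(1) False] that by (simp add: y_def p_def)
  qed (use assms in \<open>auto intro!: open_Collect_less continuous_intros\<close>)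
  moreover have "p * y x powr (p - 1) * (b / a) = - ((1 + b) / (a + b * x) * y x powr p)"
  proof -
    have "p * y x powr (p - 1) * (b / a) = (p * b) * y x powr p / (a * y x)"
      using y_pos by (simp add: powr_diff ac_simps)
    also have "p * b = - (1 + b)" using False by (simp add: p_def field_simps)
    also have "a * y x = a + b * x" using assms(1) by (simp add: y_def field_simps)
    finally show ?thesis using assms(2) by (simp add: field_simps)
  qed
  ultimately show ?thesis
    using gen_pareto_surv_eq_powr[OF assms(1) False assms(2)] by (simp add: y_def p_def)
qed

lemma continuous_on_gen_pareto_surv:
  assumes "0 < a" "-1 < b"
  shows "continuous_on {0..} (gen_pareto_surv a b)"
proof (cases "0 \<le> b")
  case True
  have "isCont (gen_pareto_surv a b) x" if "0 \<le> x" for x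
    using has_real_derivative_gen_pareto_surv[OF assms(1), of b x] assms(1) True that
    by (intro DERIV_isCont) (auto simp: add_pos_nonneg)
  then show ?thesis by (intro continuous_at_imp_continuous_on) auto
next
  case False
  then have "0 < - (1 + 1 / b)" using assms(2) by (simp add: field_simps)
  then have "continuous_on UNIV (\<lambda>x. max 0 (1 + b / a * x) powr - (1 + 1 / b))"
    by (intro continuous_on_powr' continuous_intros) auto
  then show ?thesis
    using False by (auto simp: gen_pareto_surv_def intro: continuous_on_subset)
qed

lemma has_real_derivative_gen_pareto_tail:
  assumes "0 < a" "0 < a + b * x"
  shows "((\<lambda>x. (a + b * x) * gen_pareto_surv a b x powr e) has_real_derivative
           - (((b + 1) * e - b) * gen_pareto_surv a b x powr e)) (at x)"
proof -
  let ?G = "gen_pareto_surv a b"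
  have G_pos: "0 < ?G x" by (rule gen_pareto_surv_pos[OF assms])
  have "((\<lambda>x. ?G x powr e) has_real_derivative
      e * ?G x powr (e - 1) * - ((1 + b) / (a + b * x) * ?G x)) (at x)"
    using DERIV_fun_powr[OF has_real_derivative_gen_pareto_surv[OF assms] G_pos] by simp
  then have "((\<lambda>x. (a + b * x) * ?G x powr e) has_real_derivative
      b * ?G x powr e + e * ?G x powr (e - 1) * - ((1 + b) / (a + b * x) * ?G x) * (a + b * x)) (at x)"
    by (intro DERIV_mult) (auto intro!: derivative_eq_intros)
  moreover have "e * ?G x powr (e - 1) * - ((1 + b) / (a + b * x) * ?G x) * (a + b * x)
      = - (e * (1 + b)) * (?G x powr (e - 1) * ?G x)"
    using assms(2) by (simp add: field_simps)
  moreover have "?G x powr (e - 1) * ?G x = ?G x powr e"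
    using G_pos by (simp add: powr_diff)
  ultimately show ?thesis
    by (simp add: algebra_simps)
qed

context
  fixes a b e :: real
  assumes a_pos: "0 < a" and b_gt: "-1 < b" and e_pos: "0 < e"
    and integrable_gen_pareto: "set_integrable lborel {0..} (\<lambda>x. gen_pareto_surv a b x powr e)"
begin

lemma continuous_on_gen_pareto_surv_powr:
  "continuous_on {0..} (\<lambda>x. gen_pareto_surv a b x powr e)"
  using continuous_on_gen_pareto_surv[OF a_pos b_gt] e_pos
  by (intro continuous_on_powr') (auto intro: continuous_on_const simp: gen_pareto_surv_nonneg)

lemma has_real_derivative_gen_pareto_tail_integral:
  assumes "0 < t"
  shows "((\<lambda>s. LBINT x:{s..}. gen_pareto_surv a b x powr e) has_real_derivative
           - (gen_pareto_surv a b t powr e)) (at t)"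
  by (rule has_real_derivative_tail_integral[OF _ continuous_on_gen_pareto_surv_powr
        integrable_gen_pareto assms]) measurable

lemma gen_pareto_tail_defect_eq:
  assumes "0 < s" "s \<le> t" "0 \<le> a + b * t"
  shows "((b + 1) * e - b) * (LBINT x:{s..}. gen_pareto_surv a b x powr e)
           - (a + b * s) * gen_pareto_surv a b s powr e
         = ((b + 1) * e - b) * (LBINT x:{t..}. gen_pareto_surv a b x powr e)
           - (a + b * t) * gen_pareto_surv a b t powr e"
proof (cases "s = t")
  case False
  let ?G = "gen_pareto_surv a b"
  let ?H = "\<lambda>s. ((b + 1) * e - b) * (LBINT x:{s..}. ?G x powr e) - (a + b * s) * ?G s powr e"
  have "?H t = ?H s"
  proof (rule DERIV_isconst_end[where f="?H"])
    show "s < t" using False assms(2) by simp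
    have h_cont: "continuous_on {s..t} (\<lambda>s. (a + b * s) * ?G s powr e)"
      by (rule continuous_on_mult[OF _ continuous_on_subset[OF continuous_on_gen_pareto_surv_powr]])
         (use assms(1) in \<open>auto intro!: continuous_intros\<close>)
    have F_cont: "continuous_on {s..t} (\<lambda>s. LBINT x:{s..}. ?G x powr e)"
      using assms(1)
      by (intro continuous_at_imp_continuous_on ballI
          DERIV_isCont[OF has_real_derivative_gen_pareto_tail_integral]) auto
    show "continuous_on {s..t} ?H"
      by (rule continuous_on_diff[OF continuous_on_mult[OF continuous_on_const F_cont] h_cont])
    fix x assume x: "s < x" "x < t"
    have "0 < a + b * x"
    proof (cases "b < 0")
      case True
      then show ?thesis using x assms(3) by (smt (verit) mult_strict_left_mono_neg)
    qed (use x assms(1) a_pos in \<open>simp add: add_pos_nonneg\<close>)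
    then have "(?H has_real_derivative ((b + 1) * e - b) * - (?G x powr e)
        - - (((b + 1) * e - b) * ?G x powr e)) (at x)"
      using x assms(1)
      by (intro DERIV_diff DERIV_cmult has_real_derivative_gen_pareto_tail_integral
          has_real_derivative_gen_pareto_tail a_pos) auto
    then show "(?H has_real_derivative 0) (at x)" by simp
  qed
  then show ?thesis by simp
qed simp

lemma gen_pareto_tail_weight_limit:
  assumes "0 \<le> b" and lim: "((\<lambda>x. (a + b * x) * gen_pareto_surv a b x powr e) \<longlongrightarrow> l) at_top"
  shows "l = 0"
proof -
  let ?G = "gen_pareto_surv a b"
  have "\<forall>\<^sub>F x in at_top. 0 \<le> (a + b * x) * ?G x powr e"
    using eventually_ge_at_top[of 0]
    by eventually_elim (use assms(1) a_pos in \<open>simp add: gen_pareto_surv_nonneg\<close>)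
  with lim have "0 \<le> l"
    by (rule tendsto_lowerbound) simp
  moreover have "\<not> 0 < l"
  proof
    assume "0 < l"
    then obtain s where s: "\<And>x. s \<le> x \<Longrightarrow> l / 2 < (a + b * x) * ?G x powr e"
      using order_tendstoD(1)[OF lim, of "l / 2"] by (auto simp: eventually_at_top_linorder)
    define s' where "s' = max s 0"
    have "\<not> set_integrable lborel {s'..} (\<lambda>x. ?G x powr e)"
    proof (rule not_set_integrable_ge_inverse_linear[where p=a and q="b + 1" and \<kappa>="l / 2"])
      show "l / 2 / (a + (b + 1) * x) \<le> ?G x powr e" if "s' \<le> x" for x
      proof -
        have x: "0 \<le> x" "s \<le> x" using that by (auto simp: s'_def)
        have ax: "0 < a + b * x" using x assms(1) a_pos by (simp add: add_pos_nonneg)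
        have "l / 2 / (a + (b + 1) * x) \<le> l / 2 / (a + b * x)"
          using \<open>0 < l\<close> ax x by (intro divide_left_mono mult_pos_pos) (auto simp: algebra_simps)
        also have "\<dots> \<le> (a + b * x) * ?G x powr e / (a + b * x)"
          using s[OF x(2)] ax by (intro divide_right_mono) auto
        finally show ?thesis
          using ax by simp
      qed
      show "continuous_on {s'..} (\<lambda>x. ?G x powr e)"
        by (rule continuous_on_subset[OF continuous_on_gen_pareto_surv_powr]) (auto simp: s'_def)
    qed (use \<open>0 < l\<close> a_pos assms(1) in \<open>auto simp: s'_def\<close>)
    moreover have "set_integrable lborel {s'..} (\<lambda>x. ?G x powr e)"
      by (rule set_integrable_subset[OF integrable_gen_pareto]) (auto simp: s'_def)
    ultimately show False by contradiction
  qed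
  ultimately show ?thesis by simp
qed

lemma gen_pareto_tail_integral:
  assumes "0 < t"
  shows "((b + 1) * e - b) * (LBINT x:{t..}. gen_pareto_surv a b x powr e)
           = (a + b * t) * gen_pareto_surv a b t powr e"
proof (cases "b < 0")
  case True
  define L where "L = a / - b"
  have vanish: "gen_pareto_surv a b x powr e = 0" if "L \<le> x" for x
    using that True a_pos gen_pareto_surv_eq_0[OF a_pos, of b x]
    by (simp add: L_def field_simps)
  have tail_vanish: "(LBINT y:{x..}. gen_pareto_surv a b y powr e) = 0" if "L \<le> x" for x
  proof -
    have "(LBINT y:{x..}. gen_pareto_surv a b y powr e) = (LBINT y:{x..}. 0)"
      using that by (intro set_lebesgue_integral_cong) (auto simp: vanish)
    then show ?thesis by (simp add: set_lebesgue_integral_def)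
  qed
  show ?thesis
  proof (cases "t < L")
    case t_less: True
    have "a + b * L = 0" using True by (simp add: L_def)
    then show ?thesis
      using gen_pareto_tail_defect_eq[OF assms, of L] t_less vanish[of L] tail_vanish[of L] by simp
  qed (use vanish tail_vanish in simp)
next
  case False
  let ?H = "\<lambda>s. ((b + 1) * e - b) * (LBINT x:{s..}. gen_pareto_surv a b x powr e)
                 - (a + b * s) * gen_pareto_surv a b s powr e"
  have "((\<lambda>x. ((b + 1) * e - b) * (LBINT y:{x..}. gen_pareto_surv a b y powr e) - ?H t)
         \<longlongrightarrow> ((b + 1) * e - b) * 0 - ?H t) at_top"
    using integrable_gen_pareto
    by (intro tendsto_intros tendsto_tail_integral_at_top) measurable
  moreover have "\<forall>\<^sub>F x in at_top. ((b + 1) * e - b) * (LBINT y:{x..}. gen_pareto_surv a b y powr e)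
      - ?H t = (a + b * x) * gen_pareto_surv a b x powr e"
    using eventually_ge_at_top[of t]
  proof eventually_elim
    case (elim x)
    then show ?case
      using gen_pareto_tail_defect_eq[OF assms elim] False a_pos assms
      by (simp add: add_nonneg_nonneg)
  qed
  ultimately have "((\<lambda>x. (a + b * x) * gen_pareto_surv a b x powr e) \<longlongrightarrow> - ?H t) at_top"
    by (simp add: tendsto_cong)
  with False have "- ?H t = 0"
    by (intro gen_pareto_tail_weight_limit) simp_all
  then show ?thesis by simp
qed

lemma gen_pareto_tail_exponent_pos: "0 < (b + 1) * e - b"
proof (cases "b \<le> 0")
  case True
  have "0 < (b + 1) * e" using b_gt e_pos by simp
  then show ?thesis using True by linarith
next
  case False
  have "0 < (a + b * 1) * gen_pareto_surv a b 1 powr e"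
    using False a_pos gen_pareto_surv_pos[OF a_pos, of b 1] by simp
  then have "0 < ((b + 1) * e - b) * (LBINT x:{1..}. gen_pareto_surv a b x powr e)"
    using gen_pareto_tail_integral[of 1] by simp
  moreover have "0 \<le> (LBINT x:{1..}. gen_pareto_surv a b x powr e)"
    by (rule tail_integral_nonneg) simp
  ultimately show ?thesis
    by (simp add: zero_less_mult_iff)
qed

end

locale lifetime =
  fixes M :: "'a measure" and X :: "'a \<Rightarrow> real"
  assumes prob_space_M: "prob_space M"
    and X_measurable [measurable]: "X \<in> borel_measurable M"
    and X_nonneg: "AE \<omega> in M. 0 \<le> X \<omega>"
    and X_abs_cont: "absolutely_continuous lborel (distr M lborel X)"
    and X_integrable: "integrable M X"
begin

interpretation prob_space M by (rule prob_space_M)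

abbreviation "Fbar \<equiv> survival M X"

lemma survival_nonneg: "0 \<le> Fbar x"
  by (simp add: survival_def)

lemma survival_le_1: "Fbar x \<le> 1"
  by (simp add: survival_def)

lemma survival_antimono: "x \<le> y \<Longrightarrow> Fbar y \<le> Fbar x"
  unfolding survival_def by (intro finite_measure_mono) auto

lemma prob_X_eq_point: "prob {\<omega> \<in> space M. X \<omega> = x} = 0"
proof -
  have "{x} \<in> null_sets (distr M lborel X)"
    using X_abs_cont finite_imp_null_set_lborel[of "{x}"]
    unfolding absolutely_continuous_def by auto
  then have "emeasure (distr M lborel X) {x} = 0" by auto
  then have "emeasure M (X -` {x} \<inter> space M) = 0"
    by (subst (asm) emeasure_distr) auto
  moreover have "X -` {x} \<inter> space M = {\<omega> \<in> space M. X \<omega> = x}" by auto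
  ultimately show ?thesis by (simp add: measure_def)
qed

lemma survival_eq_1_minus_cdf: "Fbar x = 1 - cdf (distr M borel X) x"
proof -
  have "cdf (distr M borel X) x = prob (X -` {..x} \<inter> space M)"
    unfolding cdf_def by (subst measure_distr) auto
  moreover have "{\<omega> \<in> space M. x < X \<omega>} = space M - (X -` {..x} \<inter> space M)" by auto
  ultimately show ?thesis unfolding survival_def by (simp add: prob_compl)
qed

lemma isCont_survival: "isCont Fbar x"
proof -
  interpret D: real_distribution "distr M borel X" by (rule real_distribution_distr) simp
  have "measure (distr M borel X) {x} = prob {\<omega> \<in> space M. X \<omega> = x}"
    by (subst measure_distr) (auto simp: vimage_def Int_def conj_commute)
  then have "isCont (cdf (distr M borel X)) x"
    using D.isCont_cdf prob_X_eq_point by simp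
  then show ?thesis
    unfolding survival_eq_1_minus_cdf[abs_def] by (intro continuous_intros)
qed

lemma continuous_on_survival: "continuous_on A Fbar"
  by (simp add: continuous_at_imp_continuous_on isCont_survival)

lemma survival_borel_measurable [measurable]: "Fbar \<in> borel_measurable borel"
  by (rule borel_measurable_continuous_onI[OF continuous_on_survival])

lemma survival_nonpos: "x \<le> 0 \<Longrightarrow> Fbar x = 1"
proof -
  have "AE \<omega> in M. X \<omega> \<noteq> 0"
    using prob_X_eq_point[of 0] prob_Collect_eq_0[of "\<lambda>\<omega>. X \<omega> = 0"] by simp
  then have "AE \<omega> in M. 0 < X \<omega>"
    using X_nonneg by eventually_elim auto
  then have "Fbar 0 = 1"
    unfolding survival_def by (subst prob_Collect_eq_1) auto
  then show "x \<le> 0 \<Longrightarrow> Fbar x = 1"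
    using survival_antimono[of x 0] survival_le_1[of x] by simp
qed

lemma survival_0 [simp]: "Fbar 0 = 1"
  by (simp add: survival_nonpos)

lemma survival_first_zero:
  assumes "Fbar t\<^sub>0 = 0"
  obtains L where "0 < L" "Fbar L = 0" "\<And>x. x < L \<Longrightarrow> 0 < Fbar x"
proof
  define L where "L = Inf {x. Fbar x = 0}"
  have "closed {x. Fbar x = 0}"
    by (intro closed_Collect_eq continuous_on_survival continuous_intros)
  moreover have bdd: "bdd_below {x. Fbar x = 0}"
  proof (rule bdd_belowI)
    show "0 \<le> x" if "x \<in> {x. Fbar x = 0}" for x
      using that survival_nonpos[of x] by (cases "x \<le> 0") auto
  qed
  ultimately show "Fbar L = 0"
    using closed_contains_Inf[of "{x. Fbar x = 0}"] assms by (auto simp: L_def)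
  then show "0 < L"
    using survival_nonpos[of L] by force
  show "0 < Fbar x" if "x < L" for x
    using cInf_lower[OF _ bdd, of x] survival_nonneg[of x] that by (force simp: L_def)
qed

lemma open_survival_support: "open {x. 0 < x \<and> 0 < Fbar x}"
  by (intro open_Collect_conj open_Collect_less continuous_on_survival continuous_intros)

lemma integrable_excess:
  "integrable M (\<lambda>\<omega>. indicator {\<omega> \<in> space M. t < X \<omega>} \<omega> *\<^sub>R (X \<omega> - t))"
  using X_integrable by (intro integrable_mult_indicator) auto

lemma nn_integral_survival_tail:
  "(\<integral>\<^sup>+x. ennreal (indicator {t..} x * Fbar x) \<partial>lborel)
     = ennreal (LINT \<omega>:{\<omega> \<in> space M. t < X \<omega>}|M. X \<omega> - t)"
proof -
  interpret pair_sigma_finite M lborel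
    by (intro pair_sigma_finite.intro sigma_finite_measure_axioms lborel.sigma_finite_measure_axioms)
  define f where "f \<omega> x = ennreal (indicator {t..} x * indicator {\<omega> \<in> space M. x < X \<omega>} \<omega>)" for \<omega> x
  have "case_prod f = (\<lambda>p. if fst p \<in> space M \<and> t \<le> snd p \<and> snd p < X (fst p) then 1 else 0)"
    unfolding f_def by (auto simp: indicator_def fun_eq_iff)
  then have f_measurable: "case_prod f \<in> borel_measurable (M \<Otimes>\<^sub>M lborel)"
    by simp
  have "(\<integral>\<^sup>+x. ennreal (indicator {t..} x * Fbar x) \<partial>lborel) = (\<integral>\<^sup>+x. (\<integral>\<^sup>+\<omega>. f \<omega> x \<partial>M) \<partial>lborel)"
  proof (intro nn_integral_cong)
    fix x
    have "(\<integral>\<^sup>+\<omega>. f \<omega> x \<partial>M)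
        = (\<integral>\<^sup>+\<omega>. ennreal (indicator {t..} x) * indicator {\<omega> \<in> space M. x < X \<omega>} \<omega> \<partial>M)"
      unfolding f_def by (intro nn_integral_cong) (auto simp: indicator_def)
    also have "\<dots> = ennreal (indicator {t..} x * Fbar x)"
      by (simp add: nn_integral_cmult_indicator survival_def emeasure_eq_measure ennreal_mult)
    finally show "ennreal (indicator {t..} x * Fbar x) = (\<integral>\<^sup>+\<omega>. f \<omega> x \<partial>M)" by simp
  qed
  also have "\<dots> = (\<integral>\<^sup>+\<omega>. (\<integral>\<^sup>+x. f \<omega> x \<partial>lborel) \<partial>M)"
    by (rule Fubini'[OF f_measurable])
  also have "\<dots> = (\<integral>\<^sup>+\<omega>. ennreal (indicator {\<omega> \<in> space M. t < X \<omega>} \<omega> *\<^sub>R (X \<omega> - t)) \<partial>M)"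
  proof (intro nn_integral_cong)
    fix \<omega> assume "\<omega> \<in> space M"
    then have "(\<integral>\<^sup>+x. f \<omega> x \<partial>lborel) = (\<integral>\<^sup>+x. indicator {t..<X \<omega>} x \<partial>lborel)"
      unfolding f_def by (intro nn_integral_cong) (auto simp: indicator_def)
    also have "\<dots> = emeasure lborel {t..<X \<omega>}"
      by simp
    also have "\<dots> = ennreal (indicator {\<omega> \<in> space M. t < X \<omega>} \<omega> *\<^sub>R (X \<omega> - t))"
      using \<open>\<omega> \<in> space M\<close> by (cases "t < X \<omega>") (auto simp: indicator_def)
    finally show "(\<integral>\<^sup>+x. f \<omega> x \<partial>lborel) = \<dots>" .
  qed
  also have "\<dots> = ennreal (LINT \<omega>:{\<omega> \<in> space M. t < X \<omega>}|M. X \<omega> - t)"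
    unfolding set_lebesgue_integral_def
    by (rule nn_integral_eq_integral[OF integrable_excess]) (auto simp: indicator_def)
  finally show ?thesis .
qed

lemma set_integrable_survival: "set_integrable lborel {t..} Fbar"
  unfolding set_integrable_def
  by (rule integrableI_nonneg) (auto simp: survival_nonneg nn_integral_survival_tail)

lemma excess_integral_eq_tail:
  "(LINT \<omega>:{\<omega> \<in> space M. t < X \<omega>}|M. X \<omega> - t) = (LBINT x:{t..}. Fbar x)"
proof -
  have "ennreal (LBINT x:{t..}. Fbar x) = (\<integral>\<^sup>+x. ennreal (indicator {t..} x * Fbar x) \<partial>lborel)"
    using set_integrable_survival[of t]
    unfolding set_lebesgue_integral_def set_integrable_def
    by (subst nn_integral_eq_integral) (auto simp: survival_nonneg)
  moreover have "0 \<le> (LINT \<omega>:{\<omega> \<in> space M. t < X \<omega>}|M. X \<omega> - t)"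
    unfolding set_lebesgue_integral_def
    by (intro integral_nonneg_AE) (auto simp: indicator_def)
  ultimately show ?thesis
    using tail_integral_nonneg[of t Fbar] survival_nonneg
    by (simp add: nn_integral_survival_tail)
qed

lemma mean_residual_life_eq: "mean_residual_life M X t = (LBINT x:{t..}. Fbar x) / Fbar t"
  by (simp add: mean_residual_life_def excess_integral_eq_tail)

lemma has_real_derivative_tail_survival:
  "((\<lambda>s. LBINT x:{s..}. Fbar x) has_real_derivative - Fbar t) (at t)"
  by (rule has_real_derivative_tail_integral[of Fbar "t - 1" t])
     (auto simp: continuous_on_survival set_integrable_survival)

lemma continuous_on_survival_powr: "0 < e \<Longrightarrow> continuous_on A (\<lambda>x. Fbar x powr e)"
  by (intro continuous_on_powr' continuous_on_survival continuous_on_const)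
     (auto simp: survival_nonneg)

lemma tail_ratio_powr_eq:
  "(LBINT x:{t..}. (Fbar x / Fbar t) powr e) = (LBINT x:{t..}. Fbar x powr e) / Fbar t powr e"
  by (simp add: powr_divide survival_nonneg set_integral_divide_zero)

lemma tail_survival_pos:
  assumes "0 < Fbar t"
  shows "0 < (LBINT x:{t..}. Fbar x)"
proof (rule ccontr)
  assume "\<not> ?thesis"
  then have "(LINT \<omega>:{\<omega> \<in> space M. t < X \<omega>}|M. X \<omega> - t) = 0"
    using tail_integral_nonneg[of t Fbar] survival_nonneg by (simp add: excess_integral_eq_tail)
  then have "AE \<omega> in M. indicator {\<omega> \<in> space M. t < X \<omega>} \<omega> *\<^sub>R (X \<omega> - t) = 0"
    unfolding set_lebesgue_integral_def
    by (subst (asm) integral_nonneg_eq_0_iff_AE[OF integrable_excess]) (auto simp: indicator_def)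
  then have "AE \<omega> in M. \<not> t < X \<omega>"
    using AE_space by eventually_elim (auto simp: indicator_def)
  then have "Fbar t = 0"
    unfolding survival_def by (subst prob_Collect_eq_0) auto
  with assms show False by simp
qed

context
  fixes a b :: real
  assumes mrl_linear: "\<And>t. 0 \<le> t \<Longrightarrow> 0 < Fbar t \<Longrightarrow> mean_residual_life M X t = a + b * t"
begin

lemma tail_survival_eq_linear:
  assumes "0 \<le> t" "0 < Fbar t"
  shows "(LBINT x:{t..}. Fbar x) = (a + b * t) * Fbar t" "0 < a + b * t"
proof -
  show "(LBINT x:{t..}. Fbar x) = (a + b * t) * Fbar t"
    using mrl_linear[OF assms] assms(2) by (simp add: mean_residual_life_eq field_simps)
  with tail_survival_pos[OF assms(2)] assms(2) show "0 < a + b * t"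
    by (simp add: zero_less_mult_iff)
qed

lemma mrl_intercept_pos: "0 < a"
  using tail_survival_eq_linear(2)[of 0] by simp

lemma survival_eq_gen_pareto_on_support:
  assumes "0 \<le> t" "0 < Fbar t"
  shows "Fbar t = gen_pareto_surv a b t"
proof -
  let ?G = "gen_pareto_surv a b"
  define T where "T x = (LBINT y:{x..}. Fbar y)" for x
  define \<Gamma> where "\<Gamma> x = (a + b * x) * ?G x" for x
  have on_segment: "0 < Fbar x" "0 < a + b * x" "T x = (a + b * x) * Fbar x"
    if "x \<in> {0..t}" for x
  proof -
    show "0 < Fbar x" using that assms(2) survival_antimono[of x t] by simp
    then show "0 < a + b * x" "T x = (a + b * x) * Fbar x"
      using that tail_survival_eq_linear[of x] by (auto simp: T_def)
  qed
  have T_deriv: "(T has_real_derivative - Fbar x) (at x)" for x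
    unfolding T_def by (rule has_real_derivative_tail_survival)
  have \<Gamma>_deriv: "(\<Gamma> has_real_derivative - ?G x) (at x)" if "0 < a + b * x" for x
    using has_real_derivative_gen_pareto_tail[OF mrl_intercept_pos that, of 1]
    unfolding \<Gamma>_def[abs_def] by (simp add: gen_pareto_surv_nonneg)
  have "T t * \<Gamma> 0 = T 0 * \<Gamma> t"
  proof (rule linear_ode_solutions_proportional[where r="\<lambda>x. - 1 / (a + b * x)"])
    show "continuous_on {0..t} T"
      using T_deriv by (intro continuous_at_imp_continuous_on ballI DERIV_isCont) blast
    show "continuous_on {0..t} \<Gamma>"
      using \<Gamma>_deriv on_segment(2) by (intro continuous_at_imp_continuous_on ballI DERIV_isCont) blast
    show "\<Gamma> x \<noteq> 0" if "x \<in> {0..t}" for x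
      using on_segment(2)[OF that] gen_pareto_surv_pos[OF mrl_intercept_pos on_segment(2)[OF that]]
      by (simp add: \<Gamma>_def)
    show "(T has_real_derivative - 1 / (a + b * x) * T x) (at x)" if "0 < x" "x < t" for x
      using T_deriv[of x] on_segment[of x] that by simp
    show "(\<Gamma> has_real_derivative - 1 / (a + b * x) * \<Gamma> x) (at x)" if "0 < x" "x < t" for x
      using \<Gamma>_deriv[of x] on_segment(2)[of x] that by (simp add: \<Gamma>_def)
  qed (use assms(1) in simp)
  moreover have "T 0 = a" "\<Gamma> 0 = a"
    using on_segment(3)[of 0] assms(1) by (simp_all add: \<Gamma>_def)
  ultimately have "T t = \<Gamma> t"
    using mrl_intercept_pos by simp
  then show ?thesis
    using on_segment(2,3)[of t] assms(1) by (simp add: \<Gamma>_def)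
qed

context
  fixes L :: real
  assumes L_pos: "0 < L" and survival_L: "Fbar L = 0"
    and survival_before_L: "\<And>x. x < L \<Longrightarrow> 0 < Fbar x"
begin

lemma eventually_gen_pareto_before_first_zero:
  "\<forall>\<^sub>F x in at_left L. 0 < a + b * x \<and> Fbar x = gen_pareto_surv a b x"
  using eventually_at_left_real[OF L_pos]
  by eventually_elim
     (auto intro: survival_before_L survival_eq_gen_pareto_on_support tail_survival_eq_linear(2))

lemma tendsto_gen_pareto_first_zero: "(gen_pareto_surv a b \<longlongrightarrow> 0) (at_left L)"
proof (rule Lim_transform_eventually)
  show "(Fbar \<longlongrightarrow> 0) (at_left L)"
    using isCont_survival[of L] survival_L by (simp add: isCont_def filterlim_at_split)
  show "\<forall>\<^sub>F x in at_left L. Fbar x = gen_pareto_surv a b x"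
    using eventually_gen_pareto_before_first_zero by (rule eventually_mono) simp
qed

lemma first_zero_linear_bound: "a + b * L \<le> 0"
proof (rule ccontr)
  assume "\<not> a + b * L \<le> 0"
  then have "0 < a + b * L" by simp
  then have "isCont (gen_pareto_surv a b) L"
    by (rule DERIV_isCont[OF has_real_derivative_gen_pareto_surv[OF mrl_intercept_pos]])
  then have "(gen_pareto_surv a b \<longlongrightarrow> gen_pareto_surv a b L) (at_left L)"
    by (simp add: isCont_def filterlim_at_split)
  with tendsto_gen_pareto_first_zero have "gen_pareto_surv a b L = 0"
    by (intro tendsto_unique) auto
  with gen_pareto_surv_pos[OF mrl_intercept_pos \<open>0 < a + b * L\<close>] show False by simp
qed

lemma first_zero_slope_neg: "b < 0"
  using first_zero_linear_bound mrl_intercept_pos L_pos by (smt (verit) mult_nonneg_nonneg)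

lemma first_zero_slope_gt: "-1 < b"
proof (rule ccontr)
  assume "\<not> -1 < b"
  have "\<forall>\<^sub>F x in at_left L. 1 \<le> gen_pareto_surv a b x"
    using eventually_gen_pareto_before_first_zero eventually_at_left_real[OF L_pos]
  proof eventually_elim
    case (elim x)
    have base: "0 < 1 + b / a * x" "1 + b / a * x \<le> 1"
      using elim first_zero_slope_neg mrl_intercept_pos by (auto simp: field_simps mult_nonpos_nonneg)
    have "- (1 + 1 / b) \<le> 0"
      using \<open>\<not> -1 < b\<close> first_zero_slope_neg by (simp add: field_simps)
    then have "1 powr - (1 + 1 / b) \<le> (1 + b / a * x) powr - (1 + 1 / b)"
      using base by (rule powr_mono2')
    then show ?case
      using gen_pareto_surv_eq_powr[OF mrl_intercept_pos _ conjunct1[OF elim(1)]] first_zero_slope_neg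
      by simp
  qed
  with tendsto_gen_pareto_first_zero have "1 \<le> (0::real)"
    by (intro tendsto_lowerbound) auto
  then show False by simp
qed

end

lemma gen_pareto_if_mrl_linear:
  "-1 < b \<and> (\<forall>x>0. Fbar x = gen_pareto_surv a b x)"
proof (cases "\<exists>t\<^sub>0. Fbar t\<^sub>0 = 0")
  case True
  then obtain L where L: "0 < L" "Fbar L = 0" "\<And>x. x < L \<Longrightarrow> 0 < Fbar x"
    using survival_first_zero by blast
  have "Fbar x = gen_pareto_surv a b x" if "0 < x" for x
  proof (cases "x < L")
    case False
    then have "a + b * x \<le> a + b * L"
      using first_zero_slope_neg[OF L] by (simp add: mult_left_mono_neg)
    then show ?thesis
      using first_zero_linear_bound[OF L] survival_antimono[of L x] survival_nonneg[of x] False L(2)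
        gen_pareto_surv_eq_0[OF mrl_intercept_pos, of b x]
      by simp
  qed (use that L(3) survival_eq_gen_pareto_on_support in force)
  with first_zero_slope_gt[OF L] show ?thesis by blast
next
  case False
  then have positive: "0 < Fbar x" for x
    using survival_nonneg[of x] by (auto simp: less_le)
  have "0 \<le> b"
  proof (rule ccontr)
    assume "\<not> 0 \<le> b"
    then have "0 \<le> a / - b" using mrl_intercept_pos by (simp add: divide_nonneg_neg)
    then show False
      using tail_survival_eq_linear(2)[OF _ positive, of "a / - b"] \<open>\<not> 0 \<le> b\<close> by simp
  qed
  then show ?thesis
    using survival_eq_gen_pareto_on_support positive by auto
qed

end

context
  fixes c k :: real
  assumes c_pos: "0 < c" and c_ne_1: "c \<noteq> 1"
    and integrable_powr: "set_integrable lborel {0..} (\<lambda>x. Fbar x powr c)"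
    and proportional:
      "\<And>t. 0 < t \<Longrightarrow> (LBINT x:{t..}. (Fbar x / Fbar t) powr c) = k * mean_residual_life M X t"
begin

lemma has_real_derivative_tail_survival_powr:
  "0 < t \<Longrightarrow> ((\<lambda>s. LBINT x:{s..}. Fbar x powr c) has_real_derivative - (Fbar t powr c)) (at t)"
  using c_pos
  by (intro has_real_derivative_tail_integral[OF _ continuous_on_survival_powr integrable_powr]) auto

lemma tail_survival_powr_eq:
  assumes "0 < t" "0 < Fbar t"
  shows "(LBINT x:{t..}. Fbar x powr c) = k * (LBINT x:{t..}. Fbar x) * Fbar t powr (c - 1)"
proof -
  have "(LBINT x:{t..}. Fbar x powr c) / Fbar t powr c = k * ((LBINT x:{t..}. Fbar x) / Fbar t)"
    using proportional[OF assms(1)] by (simp add: tail_ratio_powr_eq mean_residual_life_eq)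
  moreover have "Fbar t powr c = Fbar t powr (c - 1) * Fbar t"
    using assms(2) by (simp add: powr_diff)
  ultimately show ?thesis
    using assms(2) by (simp add: field_simps)
qed

lemma proportionality_const_nonzero:
  assumes "0 < t" "0 < Fbar t"
  shows "k \<noteq> 0"
proof
  assume "k = 0"
  have "((\<lambda>x. 0) has_real_derivative 0) (at t)" by simp
  then have "((\<lambda>s. LBINT x:{s..}. Fbar x powr c) has_real_derivative 0) (at t)"
    by (rule has_field_derivative_transform_within_open[OF _ open_survival_support])
       (use assms \<open>k = 0\<close> tail_survival_powr_eq in auto)
  with has_real_derivative_tail_survival_powr[OF assms(1)] have "- (Fbar t powr c) = 0"
    by (rule DERIV_unique)
  with assms(2) show False by simp
qed

lemma survival_differentiable:
  assumes "0 < t" "0 < Fbar t"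
  shows "\<exists>U. (Fbar has_real_derivative U) (at t)"
proof -
  define S where "S s = (LBINT x:{s..}. Fbar x powr c)" for s
  define T where "T s = (LBINT x:{s..}. Fbar x)" for s
  define W where "W s = S s / (k * T s)" for s
  have k: "k \<noteq> 0" by (rule proportionality_const_nonzero[OF assms])
  have W_eq: "W x = Fbar x powr (c - 1)" if "0 < x" "0 < Fbar x" for x
    using tail_survival_powr_eq[OF that] tail_survival_pos[OF that(2)] k
    by (simp add: W_def S_def T_def)
  have "(W has_real_derivative
      (- (Fbar t powr c) * (k * T t) - S t * (k * - Fbar t)) / (k * T t * (k * T t))) (at t)"
    unfolding W_def S_def T_def using k tail_survival_pos[OF assms(2)]
    by (intro DERIV_divide DERIV_cmult has_real_derivative_tail_survival_powr
        has_real_derivative_tail_survival assms(1)) simp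
  then obtain W' where "(W has_real_derivative W') (at t)" by blast
  then have "((\<lambda>x. W x powr (1 / (c - 1))) has_real_derivative
      1 / (c - 1) * W t powr (1 / (c - 1) - of_nat 1) * W') (at t)"
    by (rule DERIV_fun_powr) (use W_eq assms in simp)
  then have "(Fbar has_real_derivative 1 / (c - 1) * W t powr (1 / (c - 1) - of_nat 1) * W') (at t)"
  proof (rule has_field_derivative_transform_within_open[OF _ open_survival_support])
    show "W x powr (1 / (c - 1)) = Fbar x" if "x \<in> {x. 0 < x \<and> 0 < Fbar x}" for x
      using that c_ne_1 by (simp add: W_eq powr_powr survival_nonneg)
  qed (use assms in simp)
  then show ?thesis by blast
qed

lemma survival_deriv_eq:
  assumes "0 < t" "0 < Fbar t" and U: "(Fbar has_real_derivative U) (at t)"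
  shows "k * (c - 1) * (LBINT x:{t..}. Fbar x) * U = (k - 1) * (Fbar t)\<^sup>2"
proof -
  define T where "T s = (LBINT x:{s..}. Fbar x)" for s
  define p where "p = Fbar t powr (c - 2)"
  have p_pos: "0 < p" using assms(2) by (simp add: p_def)
  have "((\<lambda>x. k * T x * Fbar x powr (c - 1)) has_real_derivative
      k * T t * ((c - 1) * Fbar t powr (c - 1 - of_nat 1) * U) + k * - Fbar t * Fbar t powr (c - 1)) (at t)"
    unfolding T_def using assms(2)
    by (intro DERIV_mult' DERIV_cmult has_real_derivative_tail_survival DERIV_fun_powr U) simp
  then have "((\<lambda>s. LBINT x:{s..}. Fbar x powr c) has_real_derivative
      k * T t * ((c - 1) * Fbar t powr (c - 1 - of_nat 1) * U) + k * - Fbar t * Fbar t powr (c - 1)) (at t)"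
  proof (rule has_field_derivative_transform_within_open[OF _ open_survival_support])
    show "k * T x * Fbar x powr (c - 1) = (LBINT y:{x..}. Fbar y powr c)"
      if "x \<in> {x. 0 < x \<and> 0 < Fbar x}" for x
      using tail_survival_powr_eq[of x] that by (simp add: T_def)
  qed (use assms in simp)
  with has_real_derivative_tail_survival_powr[OF assms(1)]
  have "- (Fbar t powr c)
      = k * T t * ((c - 1) * Fbar t powr (c - 1 - of_nat 1) * U) + k * - Fbar t * Fbar t powr (c - 1)"
    by (rule DERIV_unique)
  moreover have "Fbar t powr (c - 1) = p * Fbar t" "Fbar t powr c = p * (Fbar t)\<^sup>2"
    "Fbar t powr (c - 1 - of_nat 1) = p"
    using assms(2) by (simp_all add: p_def powr_diff power2_eq_square powr_add[symmetric])
  ultimately have "p * (- (Fbar t)\<^sup>2) = p * (- k * (Fbar t)\<^sup>2 + k * (c - 1) * T t * U)"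
    by (simp add: algebra_simps power2_eq_square)
  then have "- (Fbar t)\<^sup>2 = - k * (Fbar t)\<^sup>2 + k * (c - 1) * T t * U"
    using p_pos by (simp only: mult_cancel_left) simp
  then show ?thesis
    by (simp add: T_def algebra_simps)
qed

lemma has_real_derivative_mrl:
  assumes "0 < t" "0 < Fbar t"
  shows "(mean_residual_life M X has_real_derivative (1 - c * k) / (k * (c - 1))) (at t)"
proof -
  define T where "T s = (LBINT x:{s..}. Fbar x)" for s
  obtain U where U: "(Fbar has_real_derivative U) (at t)"
    using survival_differentiable[OF assms] by blast
  have "((\<lambda>x. T x / Fbar x) has_real_derivative
      (- Fbar t * Fbar t - T t * U) / (Fbar t * Fbar t)) (at t)"
    unfolding T_def using assms(2) by (intro DERIV_divide has_real_derivative_tail_survival U) simp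
  moreover have "(- Fbar t * Fbar t - T t * U) / (Fbar t * Fbar t) = (1 - c * k) / (k * (c - 1))"
  proof -
    have "k * (c - 1) * T t * U = (k - 1) * (Fbar t)\<^sup>2"
      unfolding T_def by (rule survival_deriv_eq[OF assms U])
    moreover have "k \<noteq> 0" by (rule proportionality_const_nonzero[OF assms])
    ultimately show ?thesis
      using assms(2) c_ne_1 by (simp add: field_simps power2_eq_square)
  qed
  moreover have "mean_residual_life M X = (\<lambda>x. T x / Fbar x)"
    by (simp add: fun_eq_iff T_def mean_residual_life_eq)
  ultimately show ?thesis by simp
qed

lemma mrl_linear_if_proportional:
  assumes "0 \<le> t" "0 < Fbar t"
  shows "mean_residual_life M X t = mean_residual_life M X 0 + (1 - c * k) / (k * (c - 1)) * t"
proof (cases "t = 0")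
  case False
  define \<beta> where "\<beta> = (1 - c * k) / (k * (c - 1))"
  have positive: "0 < Fbar x" if "x \<le> t" for x
    using survival_antimono[OF that] assms(2) by simp
  have "(\<lambda>x. mean_residual_life M X x - \<beta> * x) t = (\<lambda>x. mean_residual_life M X x - \<beta> * x) 0"
  proof (rule DERIV_isconst_end[where f="\<lambda>x. mean_residual_life M X x - \<beta> * x"])
    show "0 < t" using False assms(1) by simp
    show "continuous_on {0..t} (\<lambda>x. mean_residual_life M X x - \<beta> * x)"
      unfolding mean_residual_life_eq
      using has_real_derivative_tail_survival
      by (intro continuous_at_imp_continuous_on ballI continuous_intros isCont_survival DERIV_isCont)
         (use positive in force)+
    show "((\<lambda>x. mean_residual_life M X x - \<beta> * x) has_real_derivative 0) (at x)"
      if "0 < x" "x < t" for x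
    proof -
      have "(mean_residual_life M X has_real_derivative \<beta>) (at x)"
        unfolding \<beta>_def using has_real_derivative_mrl[OF that(1) positive] that by simp
      then show ?thesis by (auto intro!: derivative_eq_intros)
    qed
  qed
  then show ?thesis by (simp add: \<beta>_def)
qed simp

end

lemma proportional_if_gen_pareto:
  assumes "0 < c" and int: "set_integrable lborel {0..} (\<lambda>x. Fbar x powr c)"
    and "0 < a" "-1 < b" and gen_pareto: "\<forall>x>0. Fbar x = gen_pareto_surv a b x" and "0 < t"
  shows "(LBINT x:{t..}. (Fbar x / Fbar t) powr c)
           = 1 / ((b + 1) * c - b) * mean_residual_life M X t"
proof -
  let ?G = "gen_pareto_surv a b"
  have on_nonneg: "Fbar x = ?G x" if "0 \<le> x" for x
    using gen_pareto that by (cases "x = 0") auto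
  have tail_eq: "(LBINT x:{s..}. Fbar x powr e) = (LBINT x:{s..}. ?G x powr e)" if "0 \<le> s" for s e
    using that by (intro set_lebesgue_integral_cong) (auto simp: on_nonneg)
  have "set_integrable lborel {0..} (\<lambda>x. ?G x powr 1)"
    using set_integrable_survival[of 0]
    by (subst set_integrable_cong[OF refl refl]) (auto simp: on_nonneg gen_pareto_surv_nonneg)
  from gen_pareto_tail_integral[OF assms(3,4) zero_less_one this assms(6)]
  have mean: "(LBINT x:{t..}. ?G x) = (a + b * t) * ?G t"
    by (simp add: gen_pareto_surv_nonneg)
  have "set_integrable lborel {0..} (\<lambda>x. ?G x powr c)"
    using int by (subst set_integrable_cong[OF refl refl]) (auto simp: on_nonneg)
  note gen_pareto_tail_exponent_pos[OF assms(3,4,1) this]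
    gen_pareto_tail_integral[OF assms(3,4,1) this assms(6)]
  then have powr: "(LBINT x:{t..}. ?G x powr c) = (a + b * t) * ?G t powr c / ((b + 1) * c - b)"
    by (simp add: field_simps)
  show ?thesis
  proof (cases "Fbar t = 0")
    case True
    (* both sides are divisions by zero *)
    then show ?thesis by (simp add: mean_residual_life_eq)
  next
    case False
    then have G_pos: "0 < ?G t"
      using on_nonneg[of t] survival_nonneg[of t] assms(6) by simp
    have "(LBINT x:{t..}. (Fbar x / Fbar t) powr c) = (LBINT x:{t..}. ?G x powr c) / ?G t powr c"
      using tail_ratio_powr_eq[of t c] tail_eq[of t c] on_nonneg[of t] assms(6) by simp
    also have "\<dots> = 1 / ((b + 1) * c - b) * ((a + b * t) * ?G t / ?G t)"
      using G_pos by (simp add: powr)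
    also have "(a + b * t) * ?G t = (LBINT x:{t..}. Fbar x)"
      unfolding mean[symmetric] using assms(6)
      by (intro set_lebesgue_integral_cong) (auto simp: on_nonneg)
    finally show ?thesis
      using on_nonneg[of t] assms(6) by (simp add: mean_residual_life_eq)
  qed
qed

end

theorem theorem3p4:
  fixes M :: "'a measure" and X :: "'a \<Rightarrow> real" and \<theta> \<alpha> \<beta> :: real
  assumes "prob_space M"
    and "X \<in> borel_measurable M"
    and "AE \<omega> in M. 0 \<le> X \<omega>"
    and "absolutely_continuous lborel (distr M lborel X)"
    and "integrable M X"
    and "\<theta> > 0" and "\<alpha> > 0" and "\<beta> > 0"
    and "\<alpha> + \<beta> * \<theta> \<noteq> 1"
    and "set_integrable lborel {0..} (\<lambda>x. survival M X x powr (\<alpha> + \<beta> * \<theta>))"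
  shows "(\<exists>k::real. \<forall>t>0. R_ph \<alpha> \<beta> \<theta> (survival M X) t = k * mean_residual_life M X t)
     \<longleftrightarrow> (\<exists>a b. a > 0 \<and> b > -1 \<and> (\<forall>x>0. survival M X x = gen_pareto_surv a b x))"
proof -
  interpret lifetime M X
    by (rule lifetime.intro[OF assms(1-5)])
  define c where "c = \<alpha> + \<beta> * \<theta>"
  have "0 < c" using assms(6-8) by (simp add: c_def add_pos_pos)
  show ?thesis
  proof
    assume "\<exists>k. \<forall>t>0. R_ph \<alpha> \<beta> \<theta> Fbar t = k * mean_residual_life M X t"
    then obtain k where proportional: "\<And>t. 0 < t \<Longrightarrow>
        (LBINT x:{t..}. (Fbar x / Fbar t) powr c) = k * mean_residual_life M X t"
      unfolding R_ph_def c_def by blast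
    have "c \<noteq> 1" "set_integrable lborel {0..} (\<lambda>x. Fbar x powr c)"
      using assms(9,10) by (simp_all add: c_def)
    note mrl_linear = mrl_linear_if_proportional[OF \<open>0 < c\<close> this proportional]
    show "\<exists>a b. 0 < a \<and> -1 < b \<and> (\<forall>x>0. Fbar x = gen_pareto_surv a b x)"
      using mrl_intercept_pos[OF mrl_linear] gen_pareto_if_mrl_linear[OF mrl_linear] by blast
  next
    assume "\<exists>a b. 0 < a \<and> -1 < b \<and> (\<forall>x>0. Fbar x = gen_pareto_surv a b x)"
    then obtain a b where "0 < a" "-1 < b" "\<forall>x>0. Fbar x = gen_pareto_surv a b x"
      by blast
    with proportional_if_gen_pareto[OF \<open>0 < c\<close>] assms(10)
    show "\<exists>k. \<forall>t>0. R_ph \<alpha> \<beta> \<theta> Fbar t = k * mean_residual_life M X t"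
      unfolding R_ph_def c_def by blast
  qed
qed

end
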